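(* Let $M$ be a Mealy machine, $A$ an NFA over $I_M$, $\sqsubseteq$ a reflexive relation on $S_A$ such that $a\sqsubseteq b$ implies $\mathcal{L}_A(a)\subseteq\mathcal{L}_A(b)$, $E\subseteq\mathcal{L}_A$ a finite prefix-closed set, and $k\in\mathbb{N}$. Suppose that every word $\alpha\in\mathcal{L}_A\setminus E$ has a prefix $\beta\in E$ which is $(k+1)$-saturated. Then $E$ is $k$-complete in the context of $\mathcal{L}_A$: for every Mealy machine $N$ with the same input/output alphabets as $M$ and at most $k$ states, $M\sim_E N$ implies $M\sim_{\mathcal{L}_A}N$.
   Context: Mealy machines $M=(I_M,O_M,S_M,\delta_M,\lambda_M,r_M)$ have $\delta_M,\lambda_M$ extended to words as usual, with $\delta_M(\alpha)=\delta_M(r_M,\alpha)$, $\lambda_M(\alpha)=\lambda_M(r_M,\alpha)$. NFAs $A=(I_M,S_A,\Delta_A,r_A)$ have all states accepting; $\Delta_A(a,\alpha)$ is the set of states reachable from $a$ by a run on $\alpha$, $\Delta_A(\alpha)=\Delta_A(r_A,\alpha)$, $\mathcal{L}_A(a)=\{\alpha:\Delta_A(a,\alpha)\ne\emptyset\}$, $\mathcal{L}_A=\mathcal{L}_A(r_A)$. For a set $V$ of words, $M\sim_V N$ means $\lambda_M(\alpha)=\lambda_N(\alpha)$ for all $\alpha\in V$. Locations $(s,a),(t,b)\in S_M\times S_A$ are incompatible, $(s,a)\nsim(t,b)$, if some $\alpha\in\mathcal{L}_A(a)\cap\mathcal{L}_A(b)$ has $\lambda_M(s,\alpha)\ne\lambda_M(t,\alpha)$.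 Words $\alpha,\beta\in E$ are $E$-separable, $\alpha\,\#_E\,\beta$, if some $\gamma$ has $\alpha\gamma,\beta\gamma\in E$ and $\lambda_M(\delta_M(\alpha),\gamma)\ne\lambda_M(\delta_M(\beta),\gamma)$. The context tree $\Gamma$ is the set of nodes $a/\alpha$ (pairs) with $\alpha\in\mathcal{L}_A$ and $a\in\Delta_A(\alpha)$; for $D\subseteq\mathcal{L}_A$, $\Gamma(D)$ is the set of nodes $a/\alpha$ with $\alpha\in D$. A node $b/\beta$ precedes $a/\alpha$, written $b/\beta\preceq a/\alpha$, if $\alpha=\beta\gamma$ for some $\gamma$ with $a\in\Delta_A(b,\gamma)$. A ranking is a sequence of nodes $(a_j/\alpha_j)_{j=1}^m$ with $\alpha_1<\dots<\alpha_m$ (strict prefixes); it is monotonous if $a_1\sqsupseteq a_2\sqsupseteq\dots\sqsupseteq a_m$. $E$ is incompatibility-preserving w.r.t. a set of nodes $R\subseteq\Gamma(E)$ if for all $a/\alpha,b/\beta\in R$ with $(\delta_M(\alpha),a)\nsim(\delta_M(\beta),b)$ we have $\alpha\,\#_E\,\beta$. A node $a/\alpha$ is $k$-saturated if there is a monotonous ranking $R\subseteq\Gamma(E)$ with $|R|=k$, $b/\beta\preceq a/\alpha$ for all $b/\beta\in R$, and $E$ incompatibility-preserving w.r.t. $R$. A word $\alpha\in\mathcal{L}_A$ is $k$-saturated if every node $a/\alpha$ with $a\in\Delta_A(\alpha)$ is $k$-saturated. *)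

theory Defs
  imports "HOL-Library.Sublist"
begin

record ('s, 'i, 'o) mealy =
  m_states :: "'s set"
  m_trans  :: "'s \<Rightarrow> 'i \<Rightarrow> 's"
  m_out    :: "'s \<Rightarrow> 'i \<Rightarrow> 'o"
  m_init   :: 's

definition mealy_machine :: "('s, 'i, 'o) mealy \<Rightarrow> bool" where
  "mealy_machine M \<longleftrightarrow> finite (m_states M) \<and> m_init M \<in> m_states M \<and>
     (\<forall>s\<in>m_states M. \<forall>x. m_trans M s x \<in> m_states M)"

fun delta_w :: "('s, 'i, 'o) mealy \<Rightarrow> 's \<Rightarrow> 'i list \<Rightarrow> 's" where
  "delta_w M s [] = s"
| "delta_w M s (x # xs) = delta_w M (m_trans M s x) xs"

fun lambda_w :: "('s, 'i, 'o) mealy \<Rightarrow> 's \<Rightarrow> 'i list \<Rightarrow> 'o list" where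
  "lambda_w M s [] = []"
| "lambda_w M s (x # xs) = m_out M s x # lambda_w M (m_trans M s x) xs"

definition delta0 :: "('s, 'i, 'o) mealy \<Rightarrow> 'i list \<Rightarrow> 's" where
  "delta0 M \<alpha> = delta_w M (m_init M) \<alpha>"

definition lambda0 :: "('s, 'i, 'o) mealy \<Rightarrow> 'i list \<Rightarrow> 'o list" where
  "lambda0 M \<alpha> = lambda_w M (m_init M) \<alpha>"

definition equiv_on :: "('s, 'i, 'o) mealy \<Rightarrow> 'i list set \<Rightarrow> ('q, 'i, 'o) mealy \<Rightarrow> bool" where
  "equiv_on M V N \<longleftrightarrow> (\<forall>\<alpha>\<in>V. lambda0 M \<alpha> = lambda0 N \<alpha>)"

record ('a, 'i) nfa =
  a_states :: "'a set"
  a_trans  :: "'a \<Rightarrow> 'i \<Rightarrow> 'a set"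
  a_init   :: 'a

definition nfa :: "('a, 'i) nfa \<Rightarrow> bool" where
  "nfa A \<longleftrightarrow> finite (a_states A) \<and> a_init A \<in> a_states A \<and>
     (\<forall>a\<in>a_states A. \<forall>x. a_trans A a x \<subseteq> a_states A)"

fun Delta_w :: "('a, 'i) nfa \<Rightarrow> 'a \<Rightarrow> 'i list \<Rightarrow> 'a set" where
  "Delta_w A a [] = {a}"
| "Delta_w A a (x # xs) = (\<Union>b\<in>a_trans A a x. Delta_w A b xs)"

definition Delta0 :: "('a, 'i) nfa \<Rightarrow> 'i list \<Rightarrow> 'a set" where
  "Delta0 A \<alpha> = Delta_w A (a_init A) \<alpha>"

definition lang_from :: "('a, 'i) nfa \<Rightarrow> 'a \<Rightarrow> 'i list set" where
  "lang_from A a = {\<alpha>. Delta_w A a \<alpha> \<noteq> {}}"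

definition lang :: "('a, 'i) nfa \<Rightarrow> 'i list set" where
  "lang A = lang_from A (a_init A)"

definition incompatible ::
  "('s, 'i, 'o) mealy \<Rightarrow> ('a, 'i) nfa \<Rightarrow> 's \<times> 'a \<Rightarrow> 's \<times> 'a \<Rightarrow> bool" where
  "incompatible M A p q \<longleftrightarrow>
     (case p of (s, a) \<Rightarrow> case q of (t, b) \<Rightarrow>
       (\<exists>\<alpha>\<in>lang_from A a \<inter> lang_from A b. lambda_w M s \<alpha> \<noteq> lambda_w M t \<alpha>))"

definition separable :: "('s, 'i, 'o) mealy \<Rightarrow> 'i list set \<Rightarrow> 'i list \<Rightarrow> 'i list \<Rightarrow> bool" where
  "separable M E \<alpha> \<beta> \<longleftrightarrow> \<alpha> \<in> E \<and> \<beta> \<in> E \<and>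
     (\<exists>\<gamma>. \<alpha> @ \<gamma> \<in> E \<and> \<beta> @ \<gamma> \<in> E \<and>
          lambda_w M (delta0 M \<alpha>) \<gamma> \<noteq> lambda_w M (delta0 M \<beta>) \<gamma>)"

text \<open>Nodes \<open>a/\<alpha>\<close> are represented as pairs \<open>(a, \<alpha>)\<close>. \<open>context_tree A D\<close> is \<open>\<Gamma>(D)\<close>.\<close>
definition context_tree :: "('a, 'i) nfa \<Rightarrow> 'i list set \<Rightarrow> ('a \<times> 'i list) set" where
  "context_tree A D = {(a, \<alpha>). \<alpha> \<in> lang A \<and> \<alpha> \<in> D \<and> a \<in> Delta0 A \<alpha>}"

definition precedes :: "('a, 'i) nfa \<Rightarrow> 'a \<times> 'i list \<Rightarrow> 'a \<times> 'i list \<Rightarrow> bool" where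
  "precedes A n1 n2 \<longleftrightarrow>
     (case n1 of (b, \<beta>) \<Rightarrow> case n2 of (a, \<alpha>) \<Rightarrow>
        (\<exists>\<gamma>. \<alpha> = \<beta> @ \<gamma> \<and> a \<in> Delta_w A b \<gamma>))"

definition ranking :: "('a \<times> 'i list) list \<Rightarrow> bool" where
  "ranking R \<longleftrightarrow> (\<forall>j. Suc j < length R \<longrightarrow> strict_prefix (snd (R ! j)) (snd (R ! Suc j)))"

definition monotonous :: "('a \<Rightarrow> 'a \<Rightarrow> bool) \<Rightarrow> ('a \<times> 'i list) list \<Rightarrow> bool" where
  "monotonous le R \<longleftrightarrow> (\<forall>j. Suc j < length R \<longrightarrow> le (fst (R ! Suc j)) (fst (R ! j)))"

definition incompat_preserving ::
  "('s, 'i, 'o) mealy \<Rightarrow> ('a, 'i) nfa \<Rightarrow> 'i list set \<Rightarrow> ('a \<times> 'i list) set \<Rightarrow> bool" where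
  "incompat_preserving M A E R \<longleftrightarrow>
     (\<forall>(a, \<alpha>)\<in>R. \<forall>(b, \<beta>)\<in>R.
        incompatible M A (delta0 M \<alpha>, a) (delta0 M \<beta>, b) \<longrightarrow> separable M E \<alpha> \<beta>)"

definition node_saturated ::
  "('s, 'i, 'o) mealy \<Rightarrow> ('a, 'i) nfa \<Rightarrow> ('a \<Rightarrow> 'a \<Rightarrow> bool) \<Rightarrow> 'i list set \<Rightarrow> nat
     \<Rightarrow> 'a \<times> 'i list \<Rightarrow> bool" where
  "node_saturated M A le E k n \<longleftrightarrow>
     (\<exists>R. ranking R \<and> monotonous le R \<and> set R \<subseteq> context_tree A E \<and> length R = k \<and>
          (\<forall>m\<in>set R. precedes A m n) \<and> incompat_preserving M A E (set R))"

definition word_saturated ::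
  "('s, 'i, 'o) mealy \<Rightarrow> ('a, 'i) nfa \<Rightarrow> ('a \<Rightarrow> 'a \<Rightarrow> bool) \<Rightarrow> 'i list set \<Rightarrow> nat
     \<Rightarrow> 'i list \<Rightarrow> bool" where
  "word_saturated M A le E k \<alpha> \<longleftrightarrow>
     \<alpha> \<in> lang A \<and> (\<forall>a\<in>Delta0 A \<alpha>. node_saturated M A le E k (a, \<alpha>))"

end

theory Submission
  imports Defs
begin

text \<open>Suppose \<open>M \<sim>\<^sub>E N\<close> with \<open>N\<close> having at most \<open>k\<close> states, and take a shortest counterexample
\<open>\<alpha> \<in> \<L>\<^sub>A\<close>. It lies outside \<open>E\<close>, so \<open>\<alpha> = \<beta>\<gamma>\<close> with \<open>\<beta> \<in> E\<close> being \<open>(k+1)\<close>-saturated; choose the node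
\<open>a/\<beta>\<close> through which \<open>\<gamma>\<close> is accepted and a ranking of \<open>k+1\<close> nodes preceding it. By pigeonhole
two ranking words \<open>\<alpha>\<^sub>i < \<alpha>\<^sub>j\<close> reach the same state of \<open>N\<close>, so they are not \<open>E\<close>-separable, hence
(incompatibility preservation) their locations are compatible. Monotonicity makes the suffix
\<open>\<rho>\<close> with \<open>\<alpha> = \<alpha>\<^sub>j\<rho>\<close> acceptable from \<open>a\<^sub>i\<close> as well, so \<open>M\<close> behaves alike on \<open>\<rho>\<close> after \<open>\<alpha>\<^sub>i\<close> and
after \<open>\<alpha>\<^sub>j\<close>, while \<open>N\<close> is in the same state: \<open>\<alpha>\<^sub>i\<rho>\<close> is a shorter counterexample.\<close>

lemma lambda_w_append:
  "lambda_w M s (xs @ ys) = lambda_w M s xs @ lambda_w M (delta_w M s xs) ys"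
  by (induction xs arbitrary: s) auto

lemma lambda0_append: "lambda0 M (xs @ ys) = lambda0 M xs @ lambda_w M (delta0 M xs) ys"
  unfolding lambda0_def delta0_def by (rule lambda_w_append)

lemma delta_w_in_states:
  assumes "mealy_machine N" "s \<in> m_states N"
  shows "delta_w N s xs \<in> m_states N"
  using assms(2)
  by (induction xs arbitrary: s) (use assms(1) in \<open>auto simp: mealy_machine_def\<close>)

lemma delta0_in_states: "mealy_machine N \<Longrightarrow> delta0 N xs \<in> m_states N"
  unfolding delta0_def by (simp add: delta_w_in_states mealy_machine_def)

lemma Delta_w_append: "Delta_w A a (xs @ ys) = (\<Union>b\<in>Delta_w A a xs. Delta_w A b ys)"
  by (induction xs arbitrary: a) auto

lemma lang_from_append_iff:
  "xs @ ys \<in> lang_from A a \<longleftrightarrow> (\<exists>b\<in>Delta_w A a xs. ys \<in> lang_from A b)"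
  unfolding lang_from_def by (auto simp: Delta_w_append)

lemma Delta_w_subset_states:
  assumes "nfa A" "a \<in> a_states A"
  shows "Delta_w A a xs \<subseteq> a_states A"
  using assms(2)
proof (induction xs arbitrary: a)
  case (Cons x xs)
  have "a_trans A a x \<subseteq> a_states A"
    using assms(1) Cons.prems unfolding nfa_def by blast
  then show ?case using Cons.IH by auto
qed simp

lemma context_tree_in_states:
  assumes "nfa A" "(a, \<alpha>) \<in> context_tree A D"
  shows "a \<in> a_states A"
  using assms Delta_w_subset_states[OF assms(1), of "a_init A" \<alpha>]
  unfolding context_tree_def Delta0_def nfa_def by auto

lemma delta0_collision:
  fixes ws :: "'i list list" and N :: "('q, 'i, 'o) mealy"
  assumes "mealy_machine N" "card (m_states N) < length ws"
  obtains i j where "i < j" "j < length ws" "delta0 N (ws ! i) = delta0 N (ws ! j)"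
proof -
  have "(\<lambda>j. delta0 N (ws ! j)) ` {..<length ws} \<subseteq> m_states N"
    using delta0_in_states[OF assms(1)] by auto
  then have "\<not> inj_on (\<lambda>j. delta0 N (ws ! j)) {..<length ws}"
    using card_inj_on_le[of _ "{..<length ws}" "m_states N"] assms
    unfolding mealy_machine_def by fastforce
  then show thesis
    using that unfolding inj_on_def by (metis lessThan_iff linorder_neqE_nat)
qed

lemma ranking_length_less:
  assumes "ranking R" "i < j" "j < length R"
  shows "length (snd (R ! i)) < length (snd (R ! j))"
  using assms(2,3)
proof (induction j rule: less_Suc_induct)
  case (1 n)
  then show ?case
    using assms(1) prefix_length_less unfolding ranking_def by blast
qed auto

lemma monotonous_lang_from_antimono:
  assumes "monotonous le R"
    and "\<forall>a\<in>a_states A. \<forall>b\<in>a_states A. le a b \<longrightarrow> lang_from A a \<subseteq> lang_from A b"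
    and "fst ` set R \<subseteq> a_states A" "i \<le> j" "j < length R"
  shows "lang_from A (fst (R ! j)) \<subseteq> lang_from A (fst (R ! i))"
  using assms(4,5)
proof (induction j rule: dec_induct)
  case (step n)
  have "le (fst (R ! Suc n)) (fst (R ! n))"
    using assms(1) step.prems unfolding monotonous_def by blast
  moreover have "fst (R ! Suc n) \<in> a_states A" "fst (R ! n) \<in> a_states A"
    using assms(3) step.prems by auto
  ultimately show ?case using assms(2) step by fastforce
qed simp

lemma equiv_on_residual:
  assumes "equiv_on M E N" "\<alpha> \<in> E" "\<alpha> @ \<gamma> \<in> E"
  shows "lambda_w M (delta0 M \<alpha>) \<gamma> = lambda_w N (delta0 N \<alpha>) \<gamma>"
  using assms unfolding equiv_on_def by (metis lambda0_append same_append_eq)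

lemma separable_delta0_neq:
  assumes "equiv_on M E N" "separable M E \<alpha> \<beta>"
  shows "delta0 N \<alpha> \<noteq> delta0 N \<beta>"
  using assms equiv_on_residual[OF assms(1)] unfolding separable_def by metis

lemma counterexample_transfer:
  assumes "equiv_on M E N" "\<alpha>\<^sub>i \<in> E" "\<alpha>\<^sub>j \<in> E"
    and "delta0 N \<alpha>\<^sub>i = delta0 N \<alpha>\<^sub>j"
    and "lambda_w M (delta0 M \<alpha>\<^sub>i) \<rho> = lambda_w M (delta0 M \<alpha>\<^sub>j) \<rho>"
    and "lambda0 M (\<alpha>\<^sub>j @ \<rho>) \<noteq> lambda0 N (\<alpha>\<^sub>j @ \<rho>)"
  shows "lambda0 M (\<alpha>\<^sub>i @ \<rho>) \<noteq> lambda0 N (\<alpha>\<^sub>i @ \<rho>)"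
  using assms unfolding equiv_on_def lambda0_append by auto

lemma saturated_prefix_shortens_counterexample:
  fixes N :: "('q, 'i, 'o) mealy"
  assumes A: "nfa A"
    and le_lang: "\<forall>a\<in>a_states A. \<forall>b\<in>a_states A. le a b \<longrightarrow> lang_from A a \<subseteq> lang_from A b"
    and N: "mealy_machine N" "card (m_states N) \<le> k" and eqE: "equiv_on M E N"
    and sat: "node_saturated M A le E (k + 1) (a, \<beta>)" and \<gamma>: "\<gamma> \<in> lang_from A a"
    and cex: "lambda0 M (\<beta> @ \<gamma>) \<noteq> lambda0 N (\<beta> @ \<gamma>)"
  obtains \<alpha>' where "\<alpha>' \<in> lang A" "length \<alpha>' < length (\<beta> @ \<gamma>)"
    "lambda0 M \<alpha>' \<noteq> lambda0 N \<alpha>'"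
proof -
  obtain R where rk: "ranking R" and mon: "monotonous le R"
    and RE: "set R \<subseteq> context_tree A E" and lR: "length R = k + 1"
    and prec: "\<forall>m\<in>set R. precedes A m (a, \<beta>)" and ip: "incompat_preserving M A E (set R)"
    using sat unfolding node_saturated_def by blast
  obtain i j where ij: "i < j" "j < length R"
    and coll: "delta0 N (snd (R ! i)) = delta0 N (snd (R ! j))"
    using delta0_collision[OF N(1), of "map snd R"] N(2) lR by auto
  obtain a\<^sub>i \<alpha>\<^sub>i a\<^sub>j \<alpha>\<^sub>j where Ri: "R ! i = (a\<^sub>i, \<alpha>\<^sub>i)" and Rj: "R ! j = (a\<^sub>j, \<alpha>\<^sub>j)"
    by fastforce
  have inR: "(a\<^sub>i, \<alpha>\<^sub>i) \<in> set R" "(a\<^sub>j, \<alpha>\<^sub>j) \<in> set R"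
    using Ri Rj ij by (metis nth_mem order.strict_trans)+
  then have E: "\<alpha>\<^sub>i \<in> E" "\<alpha>\<^sub>j \<in> E" and a\<^sub>i: "a\<^sub>i \<in> Delta0 A \<alpha>\<^sub>i"
    using RE unfolding context_tree_def by auto
  have "precedes A (a\<^sub>j, \<alpha>\<^sub>j) (a, \<beta>)"
    using prec inR(2) by blast
  then obtain \<sigma> where \<beta>: "\<beta> = \<alpha>\<^sub>j @ \<sigma>" and a: "a \<in> Delta_w A a\<^sub>j \<sigma>"
    unfolding precedes_def by blast
  define \<rho> where "\<rho> = \<sigma> @ \<gamma>"
  have \<rho>\<^sub>j: "\<rho> \<in> lang_from A a\<^sub>j"
    unfolding \<rho>_def lang_from_append_iff using a \<gamma> by blast
  have "fst ` set R \<subseteq> a_states A"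
    using RE context_tree_in_states[OF A] by fastforce
  then have \<rho>\<^sub>i: "\<rho> \<in> lang_from A a\<^sub>i"
    using monotonous_lang_from_antimono[OF mon le_lang, of i j] ij Ri Rj \<rho>\<^sub>j by auto
  have Nij: "delta0 N \<alpha>\<^sub>i = delta0 N \<alpha>\<^sub>j"
    using coll Ri Rj by simp
  then have "\<not> incompatible M A (delta0 M \<alpha>\<^sub>i, a\<^sub>i) (delta0 M \<alpha>\<^sub>j, a\<^sub>j)"
    using ip inR separable_delta0_neq[OF eqE] unfolding incompat_preserving_def by blast
  then have "lambda_w M (delta0 M \<alpha>\<^sub>i) \<rho> = lambda_w M (delta0 M \<alpha>\<^sub>j) \<rho>"
    using \<rho>\<^sub>i \<rho>\<^sub>j unfolding incompatible_def by auto
  moreover have "lambda0 M (\<alpha>\<^sub>j @ \<rho>) \<noteq> lambda0 N (\<alpha>\<^sub>j @ \<rho>)"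
    using cex unfolding \<beta> \<rho>_def by simp
  ultimately have "lambda0 M (\<alpha>\<^sub>i @ \<rho>) \<noteq> lambda0 N (\<alpha>\<^sub>i @ \<rho>)"
    by (rule counterexample_transfer[OF eqE E Nij])
  moreover have "\<alpha>\<^sub>i @ \<rho> \<in> lang A"
    using a\<^sub>i \<rho>\<^sub>i unfolding lang_def Delta0_def lang_from_append_iff by blast
  moreover have "length (\<alpha>\<^sub>i @ \<rho>) < length (\<beta> @ \<gamma>)"
    using ranking_length_less[OF rk ij] Ri Rj \<beta> unfolding \<rho>_def by simp
  ultimately show thesis using that by blast
qed

theorem theorem2:
  fixes M :: "('s, 'i, 'o) mealy" and A :: "('a, 'i) nfa"
    and le :: "'a \<Rightarrow> 'a \<Rightarrow> bool" and E :: "'i list set" and k :: nat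
  assumes "mealy_machine M" and "nfa A"
    and "\<forall>a\<in>a_states A. le a a"
    and "\<forall>a\<in>a_states A. \<forall>b\<in>a_states A. le a b \<longrightarrow> lang_from A a \<subseteq> lang_from A b"
    and "E \<subseteq> lang A" and "finite E"
    and "\<forall>\<alpha> \<beta>. \<alpha> @ \<beta> \<in> E \<longrightarrow> \<alpha> \<in> E"
    and "\<forall>\<alpha>\<in>lang A - E. \<exists>\<beta>. prefix \<beta> \<alpha> \<and> \<beta> \<in> E \<and> word_saturated M A le E (k + 1) \<beta>"
  shows "\<forall>N :: ('q, 'i, 'o) mealy. mealy_machine N \<and> card (m_states N) \<le> k \<longrightarrow>
           equiv_on M E N \<longrightarrow> equiv_on M (lang A) N"
proof (intro allI impI)
  fix N :: "('q, 'i, 'o) mealy"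
  assume N: "mealy_machine N \<and> card (m_states N) \<le> k" and eqE: "equiv_on M E N"
  have "lambda0 M \<alpha> = lambda0 N \<alpha>" if "\<alpha> \<in> lang A" for \<alpha>
    using that
  proof (induction "length \<alpha>" arbitrary: \<alpha> rule: less_induct)
    case less
    show ?case
    proof (rule ccontr)
      assume cex: "lambda0 M \<alpha> \<noteq> lambda0 N \<alpha>"
      then have "\<alpha> \<notin> E" using eqE unfolding equiv_on_def by blast
      then obtain \<beta> \<gamma> where \<alpha>: "\<alpha> = \<beta> @ \<gamma>" and sat: "word_saturated M A le E (k + 1) \<beta>"
        using assms(8) less.prems unfolding prefix_def by blast
      obtain a where a: "a \<in> Delta0 A \<beta>" and \<gamma>: "\<gamma> \<in> lang_from A a"
        using less.prems unfolding \<alpha> lang_def Delta0_def lang_from_append_iff by blast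
      have "node_saturated M A le E (k + 1) (a, \<beta>)"
        using sat a unfolding word_saturated_def by blast
      from saturated_prefix_shortens_counterexample[OF assms(2,4) _ _ eqE this \<gamma>]
      obtain \<alpha>' where "\<alpha>' \<in> lang A" "length \<alpha>' < length \<alpha>" "lambda0 M \<alpha>' \<noteq> lambda0 N \<alpha>'"
        using N cex unfolding \<alpha> by blast
      then show False using less.hyps by blast
    qed
  qed
  then show "equiv_on M (lang A) N" unfolding equiv_on_def by blast
qed

end
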